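(* Let $\mathbf M$ be an $(N+1,k)$-admissible and micro-reversible matrix, written in canonical form with transient states $0,\dots,N-k$ and characteristic triple $(\mu,\widetilde{\mathbf w},\widetilde{\mathbf z})$, and let $\phi:\mathbb R^+\to\mathbb R$ be convex. For a probability vector $\mathbf p\in\mathbb R^{N+1}$ with transient part $\widetilde{\mathbf p}=(p_i)_{i=0,\dots,N-k}$ define $$G_\phi(\mathbf p|\overline{\boldsymbol\pi}):=\begin{cases}\sum_{i=0}^{N-k}\phi\Big(\frac{\widetilde p_i}{\widetilde z_i\langle\widetilde{\mathbf w},\widetilde{\mathbf p}\rangle}\Big)\widetilde w_i\widetilde z_i&\text{if }\langle\widetilde{\mathbf w},\widetilde{\mathbf p}\rangle\neq0,\\ +\infty&\text{otherwise.}\end{cases}$$ Then there is $h_0>0$ depending only on $\mathbf M$ such that for every $h\in(0,h_0)$ and every probability vector $\mathbf p$, with $\mathbf M^{(h)}:=\mathbf I+h(\mathbf M-\mathbf I)$, $$G_\phi(\mathbf M^{(h)}\mathbf p|\overline{\boldsymbol\pi})\le G_\phi(\mathbf p|\overline{\boldsymbol\pi}).$$ Furthermore, if $\phi(x)\ge x-1$ for all $x\ge0$, then $G_\phi(\mathbf p|\overline{\boldsymbol\pi})\ge0$ for every probability vector $\mathbf p$.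
   Context: Column-stochastic matrices. For $1\le k<N-1$, an $(N+1)\times(N+1)$ column-stochastic $\mathbf M$ is $(N+1,k)$-admissible if, after a simultaneous permutation of rows and columns, $\mathbf M=\begin{pmatrix}\widetilde{\mathbf M}&\mathbf 0\\ \mathbf A&\mathbf I\end{pmatrix}$ with $\mathbf I$ the $k\times k$ identity, $\widetilde{\mathbf M}$ irreducible of size $N+1-k$ (the core, indexed by the transient states $0,\dots,N-k$; the last $k$ states are absorbing) and $\mathbf A$ with no zero row. The characteristic triple is $\mu=\rho(\widetilde{\mathbf M})\in(0,1)$ together with the positive left/right eigenvectors $\widetilde{\mathbf w},\widetilde{\mathbf z}$ of the core for $\mu$, normalised by $\langle\widetilde{\mathbf w},\mathbf 1\rangle=\langle\widetilde{\mathbf w},\widetilde{\mathbf z}\rangle=1$. $\mathbf M$ is micro-reversible if $\widetilde w_i\widetilde M_{ij}\widetilde z_j=\widetilde w_j\widetilde M_{ji}\widetilde z_i$ for all $i,j$. The notation $\overline{\boldsymbol\pi}$ refers to the reference measure $(\widetilde{\mathbf w}\circ\widetilde{\mathbf z},\mathbf 0)$ extended by zeros on the absorbing states. *)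

theory Defs
  imports "HOL-Analysis.Analysis"
begin

text \<open>Matrices of size (N+1)x(N+1) are functions nat => nat => real, indexed by 0..N.
  Vectors are nat => real, indexed by 0..N. Transient states are 0..N-k, absorbing N-k+1..N.\<close>

definition column_stochastic :: "nat \<Rightarrow> (nat \<Rightarrow> nat \<Rightarrow> real) \<Rightarrow> bool" where
  "column_stochastic N M \<longleftrightarrow>
     (\<forall>i\<le>N. \<forall>j\<le>N. 0 \<le> M i j) \<and> (\<forall>j\<le>N. (\<Sum>i\<le>N. M i j) = 1)"

definition irreducible_mat :: "nat \<Rightarrow> (nat \<Rightarrow> nat \<Rightarrow> real) \<Rightarrow> bool" where
  "irreducible_mat n A \<longleftrightarrow>
     (\<forall>i<n. \<forall>j<n. (i, j) \<in> {(a, b). a < n \<and> b < n \<and> A a b \<noteq> 0}\<^sup>+)"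

text \<open>(N+1,k)-admissible matrix, already written in canonical form
  M = [[Mt, 0], [A, I]] with core Mt on the transient states 0..N-k.\<close>
definition admissible_canonical :: "nat \<Rightarrow> nat \<Rightarrow> (nat \<Rightarrow> nat \<Rightarrow> real) \<Rightarrow> bool" where
  "admissible_canonical N k M \<longleftrightarrow>
     1 \<le> k \<and> k < N - 1 \<and>
     column_stochastic N M \<and>
     (\<forall>i\<le>N - k. \<forall>j. N - k < j \<and> j \<le> N \<longrightarrow> M i j = 0) \<and>
     (\<forall>i j. N - k < i \<and> i \<le> N \<and> N - k < j \<and> j \<le> N \<longrightarrow> M i j = (if i = j then 1 else 0)) \<and>
     (\<forall>i. N - k < i \<and> i \<le> N \<longrightarrow> (\<exists>j\<le>N - k. M i j \<noteq> 0)) \<and>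
     irreducible_mat (N + 1 - k) M"

definition spectral_radius_fun :: "nat \<Rightarrow> (nat \<Rightarrow> nat \<Rightarrow> real) \<Rightarrow> real" where
  "spectral_radius_fun n A = Max {norm c | c. \<exists>v :: nat \<Rightarrow> complex. (\<exists>i<n. v i \<noteq> 0) \<and>
       (\<forall>i<n. (\<Sum>j<n. complex_of_real (A i j) * v j) = c * v i)}"

definition characteristic_triple ::
  "nat \<Rightarrow> nat \<Rightarrow> (nat \<Rightarrow> nat \<Rightarrow> real) \<Rightarrow> real \<Rightarrow> (nat \<Rightarrow> real) \<Rightarrow> (nat \<Rightarrow> real) \<Rightarrow> bool" where
  "characteristic_triple N k M \<mu> w z \<longleftrightarrow>
     \<mu> = spectral_radius_fun (N + 1 - k) M \<and> 0 < \<mu> \<and> \<mu> < 1 \<and>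
     (\<forall>i\<le>N - k. 0 < w i \<and> 0 < z i) \<and>
     (\<forall>j\<le>N - k. (\<Sum>i\<le>N - k. w i * M i j) = \<mu> * w j) \<and>
     (\<forall>i\<le>N - k. (\<Sum>j\<le>N - k. M i j * z j) = \<mu> * z i) \<and>
     (\<Sum>i\<le>N - k. w i) = 1 \<and> (\<Sum>i\<le>N - k. w i * z i) = 1"

definition micro_reversible ::
  "nat \<Rightarrow> nat \<Rightarrow> (nat \<Rightarrow> nat \<Rightarrow> real) \<Rightarrow> (nat \<Rightarrow> real) \<Rightarrow> (nat \<Rightarrow> real) \<Rightarrow> bool" where
  "micro_reversible N k M w z \<longleftrightarrow>
     (\<forall>i\<le>N - k. \<forall>j\<le>N - k. w i * M i j * z j = w j * M j i * z i)"

definition prob_vector :: "nat \<Rightarrow> (nat \<Rightarrow> real) \<Rightarrow> bool" where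
  "prob_vector N p \<longleftrightarrow> (\<forall>i\<le>N. 0 \<le> p i) \<and> (\<Sum>i\<le>N. p i) = 1"

definition Mh_apply :: "nat \<Rightarrow> (nat \<Rightarrow> nat \<Rightarrow> real) \<Rightarrow> real \<Rightarrow> (nat \<Rightarrow> real) \<Rightarrow> nat \<Rightarrow> real" where
  "Mh_apply N M h p = (\<lambda>i. p i + h * ((\<Sum>j\<le>N. M i j * p j) - p i))"

definition G_phi ::
  "nat \<Rightarrow> nat \<Rightarrow> (nat \<Rightarrow> real) \<Rightarrow> (nat \<Rightarrow> real) \<Rightarrow> (real \<Rightarrow> real) \<Rightarrow> (nat \<Rightarrow> real) \<Rightarrow> ereal" where
  "G_phi N k w z \<phi> p =
     (let s = (\<Sum>i\<le>N - k. w i * p i) in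
      if s \<noteq> 0 then ereal (\<Sum>i\<le>N - k. \<phi> (p i / (z i * s)) * w i * z i) else \<infinity>)"

end

theory Submission
  imports Defs
begin

text \<open>Since the block of \<open>M\<close> from absorbing to transient states vanishes, the transient part
  of \<open>q = (I + h (M - I)) p\<close> is obtained by applying \<open>I + h (M\<^sub>T - I)\<close>, \<open>M\<^sub>T\<close> the core, to the
  transient part of \<open>p\<close>. As \<open>w\<close> is a left eigenvector of the core, \<open>\<langle>w, q\<rangle> = c \<langle>w, p\<rangle>\<close> with
  \<open>c = 1 - h + h \<mu>\<close>, so the ratios \<open>x\<^sub>i = p\<^sub>i / (z\<^sub>i \<langle>w, p\<rangle>)\<close> are mapped by the Doob transform
  \<open>K = Z\<^sup>-\<^sup>1 (I + h (M\<^sub>T - I)) Z / c\<close>, \<open>Z = diag z\<close>. For \<open>0 \<le> h \<le> 1\<close> the matrix \<open>K\<close> is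
  nonnegative, row-stochastic because \<open>z\<close> is a right eigenvector, and leaves the weights
  \<open>w\<^sub>i z\<^sub>i\<close> invariant because \<open>w\<close> is a left eigenvector; Jensen's inequality applied row by row
  then shows that \<open>G\<^sub>\<phi>\<close> does not increase. Nonnegativity follows from \<open>\<phi> x \<ge> x - 1\<close> and \<open>\<Sum>\<^sub>i x\<^sub>i w\<^sub>i z\<^sub>i = 1 = \<Sum>\<^sub>i w\<^sub>i z\<^sub>i\<close>.\<close>

lemma convex_on_sum_invariant_kernel_le:
  fixes A :: "'a set" and K :: "'a \<Rightarrow> 'a \<Rightarrow> real" and \<pi> x :: "'a \<Rightarrow> real"
  assumes "finite A" and "convex_on C \<phi>" and x_in: "\<And>j. j \<in> A \<Longrightarrow> x j \<in> C"
    and K_nonneg: "\<And>i j. i \<in> A \<Longrightarrow> j \<in> A \<Longrightarrow> 0 \<le> K i j"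
    and K_rows: "\<And>i. i \<in> A \<Longrightarrow> (\<Sum>j\<in>A. K i j) = 1"
    and K_invariant: "\<And>j. j \<in> A \<Longrightarrow> (\<Sum>i\<in>A. \<pi> i * K i j) = \<pi> j"
    and \<pi>_nonneg: "\<And>i. i \<in> A \<Longrightarrow> 0 \<le> \<pi> i"
  shows "(\<Sum>i\<in>A. \<pi> i * \<phi> (\<Sum>j\<in>A. K i j * x j)) \<le> (\<Sum>j\<in>A. \<pi> j * \<phi> (x j))"
proof -
  have "(\<Sum>i\<in>A. \<pi> i * \<phi> (\<Sum>j\<in>A. K i j * x j)) \<le> (\<Sum>i\<in>A. \<pi> i * (\<Sum>j\<in>A. K i j * \<phi> (x j)))"
  proof (rule sum_mono)
    fix i assume i: "i \<in> A"
    then have "A \<noteq> {}" by blast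
    have "\<phi> (\<Sum>j\<in>A. K i j * x j) \<le> (\<Sum>j\<in>A. K i j * \<phi> (x j))"
      using convex_on_sum[where a = "K i" and y = x, OF \<open>finite A\<close> \<open>A \<noteq> {}\<close> \<open>convex_on C \<phi>\<close>]
        K_rows[OF i] K_nonneg[OF i] x_in
      by simp
    then show "\<pi> i * \<phi> (\<Sum>j\<in>A. K i j * x j) \<le> \<pi> i * (\<Sum>j\<in>A. K i j * \<phi> (x j))"
      using \<pi>_nonneg[OF i] by (rule mult_left_mono)
  qed
  also have "\<dots> = (\<Sum>i\<in>A. \<Sum>j\<in>A. \<pi> i * K i j * \<phi> (x j))"
    by (simp add: sum_distrib_left mult.assoc)
  also have "\<dots> = (\<Sum>j\<in>A. (\<Sum>i\<in>A. \<pi> i * K i j) * \<phi> (x j))"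
    unfolding sum_distrib_right by (rule sum.swap)
  also have "\<dots> = (\<Sum>j\<in>A. \<pi> j * \<phi> (x j))"
    by (simp add: K_invariant)
  finally show ?thesis .
qed

definition lazy_step :: "'a set \<Rightarrow> ('a \<Rightarrow> 'a \<Rightarrow> real) \<Rightarrow> real \<Rightarrow> ('a \<Rightarrow> real) \<Rightarrow> 'a \<Rightarrow> real" where
  "lazy_step A M h p i = (1 - h) * p i + h * (\<Sum>j\<in>A. M i j * p j)"

definition phi_divergence ::
  "'a set \<Rightarrow> ('a \<Rightarrow> real) \<Rightarrow> ('a \<Rightarrow> real) \<Rightarrow> (real \<Rightarrow> real) \<Rightarrow> ('a \<Rightarrow> real) \<Rightarrow> real" where
  "phi_divergence A w z \<phi> p = (\<Sum>i\<in>A. \<phi> (p i / (z i * (\<Sum>j\<in>A. w j * p j))) * w i * z i)"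

definition doob_transform :: "('a \<Rightarrow> 'a \<Rightarrow> real) \<Rightarrow> ('a \<Rightarrow> real) \<Rightarrow> real \<Rightarrow> real \<Rightarrow> 'a \<Rightarrow> 'a \<Rightarrow> real" where
  "doob_transform M z \<mu> h i j = ((if i = j then 1 - h else 0) + h * M i j * z j / z i) / (1 - h + h * \<mu>)"

lemma doob_transform_nonneg:
  assumes "0 \<le> M i j" "0 < z i" "0 < z j" "0 \<le> h" "h \<le> 1" "0 < \<mu>"
  shows "0 \<le> doob_transform M z \<mu> h i j"
  unfolding doob_transform_def using assms
  by (intro divide_nonneg_nonneg add_nonneg_nonneg) auto

lemma sum_doob_transform_row:
  assumes "finite A" "i \<in> A" "z i \<noteq> 0" "1 - h + h * \<mu> \<noteq> 0"
    and right: "(\<Sum>j\<in>A. M i j * z j) = \<mu> * z i"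
  shows "(\<Sum>j\<in>A. doob_transform M z \<mu> h i j) = 1"
proof -
  have "(\<Sum>j\<in>A. doob_transform M z \<mu> h i j)
      = ((\<Sum>j\<in>A. if i = j then 1 - h else 0) + h / z i * (\<Sum>j\<in>A. M i j * z j)) / (1 - h + h * \<mu>)"
    unfolding doob_transform_def
    by (simp add: sum_divide_distrib[symmetric] sum.distrib sum_distrib_left mult_ac)
  also have "\<dots> = 1"
    using assms by (simp add: right field_simps)
  finally show ?thesis .
qed

lemma sum_weighted_doob_transform_col:
  assumes "finite A" "j \<in> A" "\<And>i. i \<in> A \<Longrightarrow> z i \<noteq> 0" "1 - h + h * \<mu> \<noteq> 0"
    and left: "(\<Sum>i\<in>A. w i * M i j) = \<mu> * w j"
  shows "(\<Sum>i\<in>A. w i * z i * doob_transform M z \<mu> h i j) = w j * z j"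
proof -
  define c where "c = 1 - h + h * \<mu>"
  have "c \<noteq> 0" using assms(4) by (simp add: c_def)
  have "(\<Sum>i\<in>A. w i * z i * doob_transform M z \<mu> h i j)
      = (\<Sum>i\<in>A. ((if i = j then (1 - h) * (w j * z j) else 0) + h * z j * (w i * M i j)) / c)"
    unfolding doob_transform_def c_def[symmetric] using assms(3) \<open>c \<noteq> 0\<close>
    by (intro sum.cong) (auto simp: field_simps)
  also have "\<dots> = ((1 - h) * (w j * z j) + h * z j * (\<Sum>i\<in>A. w i * M i j)) / c"
    using assms(1,2) by (simp add: sum_divide_distrib[symmetric] sum.distrib sum_distrib_left)
  also have "\<dots> = w j * z j"
    using assms(4) by (simp add: left c_def field_simps)
  finally show ?thesis .
qed

lemma doob_transform_ratio:
  assumes "finite A" "i \<in> A" "\<And>j. j \<in> A \<Longrightarrow> z j \<noteq> 0" "1 - h + h * \<mu> \<noteq> 0" "s \<noteq> 0"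
  shows "(\<Sum>j\<in>A. doob_transform M z \<mu> h i j * (p j / (z j * s)))
       = lazy_step A M h p i / (z i * ((1 - h + h * \<mu>) * s))"
proof -
  define c where "c = 1 - h + h * \<mu>"
  have "c \<noteq> 0" using assms(4) by (simp add: c_def)
  have "(\<Sum>j\<in>A. doob_transform M z \<mu> h i j * (p j / (z j * s)))
      = (\<Sum>j\<in>A. ((if i = j then (1 - h) * p i else 0) + h * (M i j * p j)) / (z i * (c * s)))"
    unfolding doob_transform_def c_def[symmetric] using assms(2,3,5) \<open>c \<noteq> 0\<close>
    by (intro sum.cong) (auto simp: field_simps)
  also have "\<dots> = lazy_step A M h p i / (z i * (c * s))"
    unfolding lazy_step_def using assms(1,2)
    by (simp add: sum_divide_distrib[symmetric] sum.distrib sum_distrib_left)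
  finally show ?thesis unfolding c_def .
qed

lemma sum_weighted_lazy_step:
  assumes "finite A" and left: "\<And>j. j \<in> A \<Longrightarrow> (\<Sum>i\<in>A. w i * M i j) = \<mu> * w j"
  shows "(\<Sum>i\<in>A. w i * lazy_step A M h p i) = (1 - h + h * \<mu>) * (\<Sum>i\<in>A. w i * p i)"
proof -
  have "(\<Sum>i\<in>A. w i * lazy_step A M h p i)
      = (\<Sum>i\<in>A. (1 - h) * (w i * p i) + h * (\<Sum>j\<in>A. w i * M i j * p j))"
    unfolding lazy_step_def by (intro sum.cong) (simp_all add: algebra_simps sum_distrib_left)
  also have "\<dots> = (1 - h) * (\<Sum>i\<in>A. w i * p i) + h * (\<Sum>i\<in>A. \<Sum>j\<in>A. w i * M i j * p j)"
    by (simp add: sum.distrib sum_distrib_left)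
  also have "(\<Sum>i\<in>A. \<Sum>j\<in>A. w i * M i j * p j) = (\<Sum>j\<in>A. (\<Sum>i\<in>A. w i * M i j) * p j)"
    unfolding sum_distrib_right by (rule sum.swap)
  also have "\<dots> = \<mu> * (\<Sum>j\<in>A. w j * p j)"
    by (simp add: left sum_distrib_left mult.assoc)
  finally show ?thesis
    by (simp add: algebra_simps)
qed

lemma lazy_eigenvalue_pos:
  fixes h \<mu> :: real
  assumes "0 \<le> h" "h \<le> 1" "0 < \<mu>"
  shows "0 < 1 - h + h * \<mu>"
  using assms by (cases "h = 0") (simp_all add: add_nonneg_pos)

lemma phi_divergence_lazy_step_eq:
  fixes A :: "'a set" and M :: "'a \<Rightarrow> 'a \<Rightarrow> real" and w z p :: "'a \<Rightarrow> real"
  defines "s \<equiv> \<Sum>j\<in>A. w j * p j"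
  assumes "finite A" "\<And>j. j \<in> A \<Longrightarrow> z j \<noteq> 0" "1 - h + h * \<mu> \<noteq> 0" "s \<noteq> 0"
    and left: "\<And>j. j \<in> A \<Longrightarrow> (\<Sum>i\<in>A. w i * M i j) = \<mu> * w j"
  shows "phi_divergence A w z \<phi> (lazy_step A M h p)
       = (\<Sum>i\<in>A. w i * z i * \<phi> (\<Sum>j\<in>A. doob_transform M z \<mu> h i j * (p j / (z j * s))))"
proof -
  have "(\<Sum>i\<in>A. w i * lazy_step A M h p i) = (1 - h + h * \<mu>) * s"
    unfolding s_def by (rule sum_weighted_lazy_step[OF \<open>finite A\<close> left])
  then have "phi_divergence A w z \<phi> (lazy_step A M h p)
      = (\<Sum>i\<in>A. w i * z i * \<phi> (lazy_step A M h p i / (z i * ((1 - h + h * \<mu>) * s))))"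
    unfolding phi_divergence_def by (simp add: mult_ac)
  also have "\<dots> = (\<Sum>i\<in>A. w i * z i * \<phi> (\<Sum>j\<in>A. doob_transform M z \<mu> h i j * (p j / (z j * s))))"
    using doob_transform_ratio[OF assms(2) _ assms(3-5)] by simp
  finally show ?thesis .
qed

lemma phi_divergence_lazy_step_le:
  fixes A :: "'a set" and M :: "'a \<Rightarrow> 'a \<Rightarrow> real" and w z p :: "'a \<Rightarrow> real"
  assumes "finite A" and convex: "convex_on {0..} \<phi>"
    and "0 \<le> h" "h \<le> 1" "0 < \<mu>"
    and w_pos: "\<And>i. i \<in> A \<Longrightarrow> 0 < w i" and z_pos: "\<And>i. i \<in> A \<Longrightarrow> 0 < z i"
    and M_nonneg: "\<And>i j. i \<in> A \<Longrightarrow> j \<in> A \<Longrightarrow> 0 \<le> M i j"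
    and left: "\<And>j. j \<in> A \<Longrightarrow> (\<Sum>i\<in>A. w i * M i j) = \<mu> * w j"
    and right: "\<And>i. i \<in> A \<Longrightarrow> (\<Sum>j\<in>A. M i j * z j) = \<mu> * z i"
    and p_nonneg: "\<And>i. i \<in> A \<Longrightarrow> 0 \<le> p i"
    and s_pos: "0 < (\<Sum>i\<in>A. w i * p i)"
  shows "phi_divergence A w z \<phi> (lazy_step A M h p) \<le> phi_divergence A w z \<phi> p"
proof -
  define K where "K = doob_transform M z \<mu> h"
  define x where "x j = p j / (z j * (\<Sum>i\<in>A. w i * p i))" for j
  have c_nz: "1 - h + h * \<mu> \<noteq> 0"
    using lazy_eigenvalue_pos[OF assms(3-5)] by simp
  have z_nz: "z j \<noteq> 0" if "j \<in> A" for j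
    using z_pos[OF that] by simp
  have "phi_divergence A w z \<phi> (lazy_step A M h p) = (\<Sum>i\<in>A. w i * z i * \<phi> (\<Sum>j\<in>A. K i j * x j))"
    unfolding K_def x_def using \<open>finite A\<close> z_nz c_nz s_pos left
    by (intro phi_divergence_lazy_step_eq) auto
  also have "\<dots> \<le> (\<Sum>j\<in>A. w j * z j * \<phi> (x j))"
  proof (rule convex_on_sum_invariant_kernel_le[OF \<open>finite A\<close> convex])
    show "x j \<in> {0..}" if "j \<in> A" for j
      unfolding x_def using p_nonneg[OF that] z_pos[OF that] s_pos by simp
    show "0 \<le> K i j" if "i \<in> A" "j \<in> A" for i j
      unfolding K_def
      using M_nonneg[OF that] z_pos[OF that(1)] z_pos[OF that(2)] assms(3-5)
      by (rule doob_transform_nonneg)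
    show "(\<Sum>j\<in>A. K i j) = 1" if "i \<in> A" for i
      unfolding K_def using \<open>finite A\<close> that z_nz[OF that] c_nz right[OF that]
      by (rule sum_doob_transform_row)
    show "(\<Sum>i\<in>A. w i * z i * K i j) = w j * z j" if "j \<in> A" for j
      unfolding K_def using \<open>finite A\<close> that z_nz c_nz left[OF that]
      by (rule sum_weighted_doob_transform_col)
    show "0 \<le> w i * z i" if "i \<in> A" for i
      using that w_pos z_pos by (simp add: less_imp_le)
  qed
  also have "\<dots> = phi_divergence A w z \<phi> p"
    unfolding phi_divergence_def x_def by (simp add: mult_ac)
  finally show ?thesis .
qed

lemma phi_divergence_nonneg:
  fixes A :: "'a set" and w z p :: "'a \<Rightarrow> real"
  assumes "finite A" and \<phi>_ge: "\<And>x. 0 \<le> x \<Longrightarrow> x - 1 \<le> \<phi> x"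
    and w_pos: "\<And>i. i \<in> A \<Longrightarrow> 0 < w i" and z_pos: "\<And>i. i \<in> A \<Longrightarrow> 0 < z i"
    and wz_sum: "(\<Sum>i\<in>A. w i * z i) = 1"
    and p_nonneg: "\<And>i. i \<in> A \<Longrightarrow> 0 \<le> p i"
    and s_pos: "0 < (\<Sum>i\<in>A. w i * p i)"
  shows "0 \<le> phi_divergence A w z \<phi> p"
proof -
  define s where "s = (\<Sum>i\<in>A. w i * p i)"
  define x where "x i = p i / (z i * s)" for i
  have "0 = (\<Sum>i\<in>A. w i * p i) / s - (\<Sum>i\<in>A. w i * z i)"
    using s_pos wz_sum by (simp add: s_def)
  also have "\<dots> = (\<Sum>i\<in>A. (x i - 1) * w i * z i)"
    unfolding x_def sum_divide_distrib sum_subtractf[symmetric] using z_pos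
    by (intro sum.cong) (simp_all add: field_simps less_imp_neq[symmetric])
  also have "\<dots> \<le> (\<Sum>i\<in>A. \<phi> (x i) * w i * z i)"
  proof (rule sum_mono)
    fix i assume "i \<in> A"
    moreover have "0 \<le> x i"
      unfolding x_def s_def using \<open>i \<in> A\<close> p_nonneg z_pos s_pos
      by (auto intro!: divide_nonneg_pos mult_pos_pos)
    ultimately show "(x i - 1) * w i * z i \<le> \<phi> (x i) * w i * z i"
      using \<phi>_ge w_pos z_pos by (simp add: mult_right_mono less_imp_le)
  qed
  finally show ?thesis
    unfolding phi_divergence_def x_def s_def .
qed

lemma G_phi_eq_phi_divergence:
  "G_phi N k w z \<phi> p =
     (if (\<Sum>i\<le>N - k. w i * p i) = 0 then \<infinity> else ereal (phi_divergence {..N - k} w z \<phi> p))"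
  unfolding G_phi_def phi_divergence_def Let_def by simp

lemma G_phi_cong:
  assumes "\<And>i. i \<le> N - k \<Longrightarrow> p i = q i"
  shows "G_phi N k w z \<phi> p = G_phi N k w z \<phi> q"
proof -
  have "(\<Sum>i\<le>N - k. w i * p i) = (\<Sum>i\<le>N - k. w i * q i)"
    using assms by (intro sum.cong) auto
  moreover have "(\<Sum>i\<le>N - k. \<phi> (p i / (z i * s)) * w i * z i)
               = (\<Sum>i\<le>N - k. \<phi> (q i / (z i * s)) * w i * z i)" for s
    using assms by (intro sum.cong) auto
  ultimately show ?thesis
    unfolding G_phi_def Let_def by simp
qed

lemma Mh_apply_eq_lazy_step:
  assumes "admissible_canonical N k M" and "i \<le> N - k"
  shows "Mh_apply N M h p i = lazy_step {..N - k} M h p i"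
proof -
  have "(\<Sum>j\<le>N. M i j * p j) = (\<Sum>j\<le>N - k. M i j * p j)"
    using assms unfolding admissible_canonical_def
    by (intro sum.mono_neutral_right) auto
  then show ?thesis
    unfolding Mh_apply_def lazy_step_def by (simp add: algebra_simps)
qed

lemma G_phi_Mh_apply_le:
  assumes adm: "admissible_canonical N k M" and triple: "characteristic_triple N k M \<mu> w z"
    and convex: "convex_on {0..} \<phi>" and "0 \<le> h" "h \<le> 1" and p: "prob_vector N p"
  shows "G_phi N k w z \<phi> (Mh_apply N M h p) \<le> G_phi N k w z \<phi> p"
proof -
  let ?A = "{..N - k}"
  have M_nonneg: "\<And>i j. i \<in> ?A \<Longrightarrow> j \<in> ?A \<Longrightarrow> 0 \<le> M i j"
    using adm unfolding admissible_canonical_def column_stochastic_def by auto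
  have p_nonneg: "\<And>i. i \<in> ?A \<Longrightarrow> 0 \<le> p i"
    using p unfolding prob_vector_def by auto
  from triple have "0 < \<mu>" and w_pos: "\<And>i. i \<in> ?A \<Longrightarrow> 0 < w i" and z_pos: "\<And>i. i \<in> ?A \<Longrightarrow> 0 < z i"
    and left: "\<And>j. j \<in> ?A \<Longrightarrow> (\<Sum>i\<in>?A. w i * M i j) = \<mu> * w j"
    and right: "\<And>i. i \<in> ?A \<Longrightarrow> (\<Sum>j\<in>?A. M i j * z j) = \<mu> * z i"
    unfolding characteristic_triple_def by auto
  have G_Mh: "G_phi N k w z \<phi> (Mh_apply N M h p) = G_phi N k w z \<phi> (lazy_step ?A M h p)"
    using Mh_apply_eq_lazy_step[OF adm] by (rule G_phi_cong)
  show ?thesis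
  proof (cases "(\<Sum>i\<in>?A. w i * p i) = 0")
    case True
    then show ?thesis by (simp add: G_phi_eq_phi_divergence)
  next
    case False
    moreover have "0 \<le> (\<Sum>i\<in>?A. w i * p i)"
      using w_pos p_nonneg by (intro sum_nonneg mult_nonneg_nonneg) (auto simp: less_imp_le)
    ultimately have s_pos: "0 < (\<Sum>i\<in>?A. w i * p i)" by linarith
    note lazy_eigenvalue_pos[OF \<open>0 \<le> h\<close> \<open>h \<le> 1\<close> \<open>0 < \<mu>\<close>]
    moreover have "(\<Sum>i\<in>?A. w i * lazy_step ?A M h p i) = (1 - h + h * \<mu>) * (\<Sum>i\<in>?A. w i * p i)"
      by (rule sum_weighted_lazy_step[OF finite_atMost left])
    ultimately have "(\<Sum>i\<in>?A. w i * lazy_step ?A M h p i) \<noteq> 0"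
      using s_pos by simp
    moreover have "phi_divergence ?A w z \<phi> (lazy_step ?A M h p) \<le> phi_divergence ?A w z \<phi> p"
      by (rule phi_divergence_lazy_step_le[OF _ convex \<open>0 \<le> h\<close> \<open>h \<le> 1\<close> \<open>0 < \<mu>\<close>
            w_pos z_pos M_nonneg left right p_nonneg s_pos]) simp
    ultimately show ?thesis
      unfolding G_Mh using False by (simp add: G_phi_eq_phi_divergence)
  qed
qed

lemma G_phi_nonneg:
  assumes triple: "characteristic_triple N k M \<mu> w z"
    and \<phi>_ge: "\<And>x. 0 \<le> x \<Longrightarrow> x - 1 \<le> \<phi> x" and p: "prob_vector N p"
  shows "0 \<le> G_phi N k w z \<phi> p"
proof -
  let ?A = "{..N - k}"
  have p_nonneg: "\<And>i. i \<in> ?A \<Longrightarrow> 0 \<le> p i"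
    using p unfolding prob_vector_def by auto
  from triple have w_pos: "\<And>i. i \<in> ?A \<Longrightarrow> 0 < w i" and z_pos: "\<And>i. i \<in> ?A \<Longrightarrow> 0 < z i"
    and wz_sum: "(\<Sum>i\<in>?A. w i * z i) = 1"
    unfolding characteristic_triple_def by auto
  show ?thesis
  proof (cases "(\<Sum>i\<in>?A. w i * p i) = 0")
    case True
    then show ?thesis by (simp add: G_phi_eq_phi_divergence)
  next
    case False
    moreover have "0 \<le> (\<Sum>i\<in>?A. w i * p i)"
      using w_pos p_nonneg by (intro sum_nonneg mult_nonneg_nonneg) (auto simp: less_imp_le)
    ultimately have "0 < (\<Sum>i\<in>?A. w i * p i)" by linarith
    then have "0 \<le> phi_divergence ?A w z \<phi> p"
      by (intro phi_divergence_nonneg[OF _ \<phi>_ge w_pos z_pos wz_sum p_nonneg]) auto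
    then show ?thesis
      using False by (simp add: G_phi_eq_phi_divergence)
  qed
qed

theorem proposition1:
  fixes N k :: nat and M :: "nat \<Rightarrow> nat \<Rightarrow> real" and \<mu> :: real and w z :: "nat \<Rightarrow> real"
  assumes "admissible_canonical N k M"
    and "characteristic_triple N k M \<mu> w z"
    and "micro_reversible N k M w z"
  shows "(\<exists>h0>0. \<forall>\<phi> :: real \<Rightarrow> real. convex_on {0..} \<phi> \<longrightarrow>
            (\<forall>h p. 0 < h \<and> h < h0 \<and> prob_vector N p \<longrightarrow>
               G_phi N k w z \<phi> (Mh_apply N M h p) \<le> G_phi N k w z \<phi> p))
       \<and> (\<forall>\<phi> :: real \<Rightarrow> real. convex_on {0..} \<phi> \<and> (\<forall>x\<ge>0. \<phi> x \<ge> x - 1) \<longrightarrow>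
            (\<forall>p. prob_vector N p \<longrightarrow> 0 \<le> G_phi N k w z \<phi> p))"
proof (intro conjI exI[of _ 1] allI impI)
  fix \<phi> :: "real \<Rightarrow> real" and h :: real and p
  assume "convex_on {0..} \<phi>" and "0 < h \<and> h < 1 \<and> prob_vector N p"
  then show "G_phi N k w z \<phi> (Mh_apply N M h p) \<le> G_phi N k w z \<phi> p"
    using G_phi_Mh_apply_le[OF assms(1,2)] by simp
next
  fix \<phi> :: "real \<Rightarrow> real" and p
  assume "convex_on {0..} \<phi> \<and> (\<forall>x\<ge>0. \<phi> x \<ge> x - 1)" and "prob_vector N p"
  then show "0 \<le> G_phi N k w z \<phi> p"
    using G_phi_nonneg[OF assms(2)] by simp
qed simp

end
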